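(* Let $q>9$ be an odd prime power which is a square, and let $a,b,c,d\in\mathbb{F}_q$ with $a\neq 0$. Put $\ell(x)=ax^{\sqrt{q}+1}+dx^{\sqrt{q}}+bx+c$. If there is a subset $D\subseteq\mathbb{F}_q$ with $|D|>q-\sqrt{q}/2+1/2$ such that $\ell(x)$ is a square in $\mathbb{F}_q$ (i.e. $\ell(x)=y^2$ for some $y\in\mathbb{F}_q$) for every $x\in D$, then $a^{\sqrt{q}}b=d^{\sqrt{q}}a$. *)

theory Defs
  imports Complex_Main "HOL-Computational_Algebra.Primes" "HOL-Library.Cardinality"
begin

end

theory Submission
  imports Defs "HOL-Number_Theory.Residues" "HOL-Computational_Algebra.Polynomial"
begin

text \<open>
  Write \<open>r = sqrt q = 2 m + 1\<close>. As \<open>x \<mapsto> x ^ r\<close> is additive, the substitution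
  \<open>x \<mapsto> x + t\<close> with \<open>t = - d / a\<close> removes the \<open>x ^ r\<close> term of \<open>l(x)\<close> and leaves
  \<open>f(x) = a x ^ (r + 1) + e x + C\<close>, where \<open>e = a t ^ r + b\<close> vanishes exactly when
  \<open>a ^ r b = d ^ r a\<close>. Because \<open>x ^ q = x\<close>, the \<open>r\<close>-th power of \<open>f\<close> is again a polynomial
  \<open>g\<close> of degree \<open>r + 1\<close>, so \<open>h = g ^ m f ^ (m + 1) - f\<close> takes the values
  \<open>f(x) ^ ((q + 1) / 2) - f(x)\<close> and vanishes wherever \<open>f(x)\<close> is a square. If that happens at
  more than \<open>q - m\<close> points, multiplying \<open>h\<close> by the monic polynomial with the fewer than \<open>m\<close>
  remaining points as roots and by a power of \<open>X\<close> gives a polynomial of degree \<open>< 2 (q - 1)\<close>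
  vanishing on the whole field; its coefficient of \<open>X ^ (q - 1)\<close> is minus the sum of its
  values, hence \<open>0\<close>. But this coefficient is the coefficient of \<open>X ^ (q - r)\<close> in
  \<open>g ^ m f ^ (m + 1)\<close>, which a binomial expansion identifies as
  \<open>(m + 1 choose 2) a ^ (r m + m - 1) e ^ 2 \<noteq> 0\<close>.
\<close>

text \<open>The library's \<open>finite_field_power_card_eq_same\<close> is stated for the sort \<open>finite_field\<close>,
  which a type variable of sort \<open>{field, finite}\<close> does not have.\<close>

lemma power_card_minus_one_eq_1:
  fixes x :: "'a::{field,finite}"
  assumes "x \<noteq> 0"
  shows "x ^ (CARD('a) - 1) = 1"
proof -
  let ?U = "UNIV - {0::'a}"
  have "bij_betw ((*) x) ?U ?U"
    by (rule bij_betw_byWitness[where f' = "\<lambda>y. y / x"]) (use assms in auto)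
  then have "prod ((*) x) ?U = prod id ?U"
    using prod.reindex_bij_betw[of "(*) x" ?U ?U id] by simp
  moreover have "prod ((*) x) ?U = x ^ card ?U * prod id ?U"
    by (simp add: prod.distrib)
  moreover have "prod id ?U \<noteq> 0"
    by simp
  ultimately show ?thesis
    by (simp add: card_Diff_singleton)
qed

lemma power_card_eq_self: "(x::'a::{field,finite}) ^ CARD('a) = x"
proof (cases "x = 0")
  case False
  have "x ^ CARD('a) = x * x ^ (CARD('a) - 1)"
    by (simp flip: power_Suc)
  with power_card_minus_one_eq_1[OF False] show ?thesis
    by simp
qed simp

lemma of_nat_card_eq_0: "of_nat CARD('a) = (0::'a::{field,finite})"
  using CHAR_dvd_CARD of_nat_eq_0_iff_char_dvd by blast

lemma power_eq_power_mod_card_minus_one: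
  fixes x :: "'a::{field,finite}"
  assumes "x \<noteq> 0"
  shows "x ^ n = x ^ (n mod (CARD('a) - 1))"
proof -
  have "x ^ n = (x ^ (CARD('a) - 1)) ^ (n div (CARD('a) - 1)) * x ^ (n mod (CARD('a) - 1))"
    by (simp flip: power_mult power_add)
  then show ?thesis
    by (simp only: power_card_minus_one_eq_1[OF assms] power_one mult_1)
qed

lemma sum_UNIV_power_eq_0:
  assumes "0 < n" "n < CARD('a) - 1"
  shows "(\<Sum>x\<in>UNIV. x ^ n) = (0::'a::{field,finite})"
proof -
  let ?p = "monom 1 n + [:-1::'a:]"
  have "degree ?p = n"
    using assms(1) by (subst degree_add_eq_left) (auto simp: degree_monom_eq)
  with assms(1) have roots: "card {x. poly ?p x = 0} \<le> n"
    by (metis card_poly_roots_bound degree_0 less_irrefl)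
  obtain c :: 'a where c: "c \<noteq> 0" "c ^ n \<noteq> 1"
  proof (rule ccontr)
    assume "\<not> thesis"
    with that have "UNIV - {0} \<subseteq> {x. poly ?p x = 0}"
      by (auto simp: poly_monom)
    then have "card (UNIV - {0::'a}) \<le> card {x. poly ?p x = 0}"
      by (intro card_mono) auto
    with roots assms(2) show False
      by (simp add: card_Diff_singleton)
  qed
  have "(\<Sum>x\<in>UNIV. x ^ n) = (\<Sum>x\<in>UNIV. (c * x) ^ n)"
    by (rule sum.reindex_bij_witness[of _ "\<lambda>y. c * y" "\<lambda>y. y / c"]) (use c in auto)
  also have "\<dots> = c ^ n * (\<Sum>x\<in>UNIV. x ^ n)"
    by (simp add: power_mult_distrib sum_distrib_left)
  finally have "(1 - c ^ n) * (\<Sum>x\<in>UNIV. x ^ n) = 0"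
    by (simp add: algebra_simps)
  with c show ?thesis
    by simp
qed

lemma sum_UNIV_power:
  "(\<Sum>x\<in>UNIV. x ^ n) =
     (if 0 < n \<and> (CARD('a) - 1) dvd n then -1 else (0::'a::{field,finite}))"
proof (cases "n = 0")
  case True
  then show ?thesis
    by (simp add: of_nat_card_eq_0)
next
  case False
  let ?k = "n mod (CARD('a) - 1)"
  have "(\<Sum>x\<in>UNIV. x ^ n) = (\<Sum>x\<in>UNIV - {0}. (x::'a) ^ n)"
    using False by (intro sum.mono_neutral_right) (auto simp: power_0_left)
  also have "\<dots> = (\<Sum>x\<in>UNIV - {0}. (x::'a) ^ ?k)"
    by (intro sum.cong refl power_eq_power_mod_card_minus_one) simp
  finally have sum_eq: "(\<Sum>x\<in>UNIV. x ^ n) = (\<Sum>x\<in>UNIV - {0}. (x::'a) ^ ?k)" .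
  show ?thesis
  proof (cases "?k = 0")
    case True
    then show ?thesis
      using False sum_eq by (simp add: card_Diff_singleton of_nat_diff of_nat_card_eq_0 mod_eq_0_iff_dvd)
  next
    case k: False
    have "(\<Sum>x\<in>UNIV - {0}. (x::'a) ^ ?k) = (\<Sum>x\<in>UNIV. x ^ ?k)"
      using k by (intro sum.mono_neutral_left) auto
    moreover have "?k < CARD('a) - 1"
      using card_mono[of UNIV "{0::'a, 1}"] by (intro mod_less_divisor) simp
    ultimately show ?thesis
      using k sum_eq sum_UNIV_power_eq_0[of ?k] by (auto simp: mod_eq_0_iff_dvd)
  qed
qed

lemma sum_UNIV_poly:
  fixes p :: "'a::{field,finite} poly"
  assumes "degree p < 2 * (CARD('a) - 1)"
  shows "(\<Sum>x\<in>UNIV. poly p x) = - coeff p (CARD('a) - 1)"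
proof -
  have "(\<Sum>x\<in>UNIV. poly p x) = (\<Sum>i\<le>degree p. coeff p i * (\<Sum>x\<in>UNIV. x ^ i))"
    by (simp add: poly_altdef sum_distrib_left sum.swap[of _ UNIV])
  also have "\<dots> = (\<Sum>i\<le>degree p. if i = CARD('a) - 1 then - coeff p i else 0)"
  proof (intro sum.cong refl)
    fix i assume "i \<in> {..degree p}"
    with assms have "i < (CARD('a) - 1) * 2"
      by simp
    then have "0 < i \<and> (CARD('a) - 1) dvd i \<longleftrightarrow> i = CARD('a) - 1"
      by (auto elim!: dvdE simp: mult_less_cancel1 less_2_cases_iff)
    then show "coeff p i * (\<Sum>x\<in>UNIV. x ^ i) = (if i = CARD('a) - 1 then - coeff p i else 0)"
      by (simp add: sum_UNIV_power)
  qed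
  also have "\<dots> = - coeff p (CARD('a) - 1)"
    by (auto simp: sum.delta coeff_eq_0)
  finally show ?thesis .
qed

lemma prime_CHAR_finite_field: "prime CHAR('a::{field,finite})"
  by (intro prime_CHAR_semidom finite_imp_CHAR_pos) simp

lemma square_root_of_card_is_power_of_CHAR:
  fixes r :: nat
  assumes "prime p" "CARD('a::{field,finite}) = p ^ k" "CARD('a) = r ^ 2"
  shows "\<exists>j. r = CHAR('a) ^ j"
proof -
  have "CHAR('a) dvd p ^ k"
    using CHAR_dvd_CARD assms(2) by metis
  then have "CHAR('a) = p"
    using assms(1) prime_CHAR_finite_field by (metis prime_dvd_power primes_dvd_imp_eq)
  moreover have "r dvd p ^ k"
    using assms(2,3) by (metis dvd_triv_left power2_eq_square)
  ultimately show ?thesis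
    using divides_primepow_nat[OF assms(1)] by blast
qed

lemma square_power_half_card_succ:
  fixes y :: "'a::{field,finite}"
  assumes "2 * k = CARD('a) + 1"
  shows "(y ^ 2) ^ k = y ^ 2"
proof -
  have "(y ^ 2) ^ k = y ^ CARD('a) * y"
    by (simp flip: power_mult add: assms)
  then show ?thesis
    by (simp add: power_card_eq_self power2_eq_square)
qed

lemma Frobenius_trinomial:
  fixes A e C x :: "'a::{field,finite}"
  assumes "r = CHAR('a) ^ j" "CARD('a) = r ^ 2"
  shows "(A * x ^ (r + 1) + e * x + C) ^ r = A ^ r * x ^ (r + 1) + e ^ r * x ^ r + C ^ r"
proof -
  have frob: "(u + v) ^ r = u ^ r + v ^ r" for u v :: 'a
    by (rule freshmans_dream'[OF prime_CHAR_finite_field assms(1)])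
  have "(x ^ (r + 1)) ^ r = x ^ CARD('a) * x ^ r"
    by (simp add: assms(2) power2_eq_square algebra_simps flip: power_mult power_add)
  then have "(x ^ (r + 1)) ^ r = x ^ (r + 1)"
    by (simp add: power_card_eq_self)
  then show ?thesis
    by (simp add: frob power_mult_distrib)
qed

lemma Frobenius_trinomial_power_half_card_succ:
  fixes A e C x y :: "'a::{field,finite}"
  assumes r_char: "r = CHAR('a) ^ j" and q: "CARD('a) = r ^ 2" and r: "r = 2 * m + 1"
    and y: "A * x ^ (r + 1) + e * x + C = y ^ 2"
  shows "(A ^ r * x ^ (r + 1) + e ^ r * x ^ r + C ^ r) ^ m * (A * x ^ (r + 1) + e * x + C) ^ (m + 1) =
    A * x ^ (r + 1) + e * x + C"
proof -
  have exponent: "2 * (r * m + (m + 1)) = CARD('a) + 1"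
    using q r by (simp add: power2_eq_square algebra_simps)
  have "(A ^ r * x ^ (r + 1) + e ^ r * x ^ r + C ^ r) ^ m * (A * x ^ (r + 1) + e * x + C) ^ (m + 1) =
      ((A * x ^ (r + 1) + e * x + C) ^ r) ^ m * (A * x ^ (r + 1) + e * x + C) ^ (m + 1)"
    by (simp only: Frobenius_trinomial[OF r_char q])
  also have "\<dots> = (y ^ 2) ^ (r * m + (m + 1))"
    by (simp only: y) (simp only: power_mult power_add)
  also have "\<dots> = A * x ^ (r + 1) + e * x + C"
    by (simp only: y square_power_half_card_succ[OF exponent])
  finally show ?thesis .
qed

lemma shift_Frobenius_trinomial:
  fixes a b c d t x :: "'a::comm_ring_1"
  assumes frob: "\<And>u v :: 'a. (u + v) ^ r = u ^ r + v ^ r" and "a * t + d = 0"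
  shows "a * (x + t) ^ (r + 1) + d * (x + t) ^ r + b * (x + t) + c =
    a * x ^ (r + 1) + (a * t ^ r + b) * x + (a * t ^ (r + 1) + d * t ^ r + b * t + c)"
proof -
  have "a * (x + t) ^ (r + 1) + d * (x + t) ^ r + b * (x + t) + c =
      a * x ^ (r + 1) + (a * t + d) * x ^ r + (a * t ^ r + b) * x + (a * t ^ (r + 1) + d * t ^ r + b * t + c)"
    by (simp add: frob algebra_simps)
  with assms(2) show ?thesis
    by simp
qed

lemma coeff_monic_mult:
  fixes v h :: "'a::comm_semiring_1 poly"
  assumes "degree v = w" "coeff v w = 1"
    and "\<And>j. n < j \<Longrightarrow> j \<le> n + w \<Longrightarrow> coeff h j = 0"
  shows "coeff (v * h) (n + w) = coeff h n"
proof -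
  have "coeff (v * h) (n + w) = (\<Sum>i\<le>n + w. coeff v i * coeff h (n + w - i))"
    by (rule coeff_mult)
  also have "\<dots> = (\<Sum>i\<le>n + w. if i = w then coeff h n else 0)"
  proof (intro sum.cong refl)
    fix i assume "i \<in> {..n + w}"
    then show "coeff v i * coeff h (n + w - i) = (if i = w then coeff h n else 0)"
      using assms by (cases i w rule: linorder_cases) (auto simp: coeff_eq_0)
  qed
  also have "\<dots> = coeff h n"
    by simp
  finally show ?thesis .
qed

lemma coeff_eq_0_if_vanishing_off:
  fixes h :: "'a::{field,finite} poly"
  assumes vanish: "\<And>x. x \<notin> W \<Longrightarrow> poly h x = 0"
    and window: "\<And>j. n < j \<Longrightarrow> j \<le> n + card W \<Longrightarrow> coeff h j = 0"
    and "n + card W < CARD('a)"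
    and "degree h + 1 < CARD('a) + n"
  shows "coeff h n = 0"
proof -
  define v where "v = (\<Prod>x\<in>W. [:-x, 1:])"
  define k where "k = CARD('a) - 1 - (n + card W)"
  define p where "p = monom 1 k * (v * h)"
  have deg_v: "degree v = card W"
    unfolding v_def by (subst degree_prod_eq_sum_degree) auto
  moreover have "coeff v (card W) = 1"
    using lead_coeff_prod[of "\<lambda>x. [:-x, 1:]" W] deg_v unfolding v_def by simp
  ultimately have coeff_vh: "coeff (v * h) (n + card W) = coeff h n"
    by (rule coeff_monic_mult) (use window in auto)
  have "poly p x = 0" for x
    using vanish[of x] unfolding p_def v_def by (cases "x \<in> W") (auto simp: poly_prod)
  moreover have "degree p < 2 * (CARD('a) - 1)"
  proof -
    have "degree (v * h) \<le> card W + degree h"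
      using degree_mult_le[of v h] deg_v by simp
    moreover have "degree p \<le> degree (monom (1::'a) k) + degree (v * h)"
      unfolding p_def by (rule degree_mult_le)
    ultimately show ?thesis
      using degree_monom_le[of "1::'a" k] assms(3,4) unfolding k_def by linarith
  qed
  ultimately have "coeff p (CARD('a) - 1) = 0"
    using sum_UNIV_poly[of p] by simp
  moreover have "CARD('a) - 1 = k + (n + card W)"
    using assms(3) unfolding k_def by linarith
  ultimately show ?thesis
    by (simp only:) (simp add: p_def coeff_monom_mult coeff_vh)
qed

lemma coeff_mult_neq_0E:
  assumes "coeff (p * q) n \<noteq> 0"
  obtains i j where "n = i + j" "coeff p i \<noteq> 0" "coeff q j \<noteq> 0"
proof -
  obtain i where "i \<le> n" "coeff p i * coeff q (n - i) \<noteq> 0"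
    using sum.not_neutral_contains_not_neutral[OF assms[unfolded coeff_mult]] by blast
  then show thesis
    using that[of i "n - i"] mult_not_zero by force
qed

lemma coeff_power_neq_0E:
  fixes p :: "'a::comm_semiring_1 poly"
  assumes support: "\<And>i. coeff p i \<noteq> 0 \<Longrightarrow> i = 0 \<or> i = s"
    and "coeff (p ^ k) n \<noteq> 0"
  obtains j where "j \<le> k" "n = j * s"
  using assms(2)
proof (induction k arbitrary: n thesis)
  case 0
  then show ?case
    by (auto split: if_splits)
next
  case (Suc k)
  from Suc.prems(2) obtain i i' where n: "n = i + i'" and "coeff p i \<noteq> 0" "coeff (p ^ k) i' \<noteq> 0"
    by (auto elim: coeff_mult_neq_0E)
  obtain j where j: "j \<le> k" "i' = j * s"
    using Suc.IH \<open>coeff (p ^ k) i' \<noteq> 0\<close> by blast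
  from support \<open>coeff p i \<noteq> 0\<close> have "i = 0 \<or> i = s" .
  with n j(2) have "n = j * s \<or> n = Suc j * s"
    by auto
  then show ?case
  proof
    assume "n = j * s"
    show thesis
      by (rule Suc.prems(1)[OF le_SucI[OF j(1)] \<open>n = j * s\<close>])
  next
    assume "n = Suc j * s"
    show thesis
      by (rule Suc.prems(1)[OF Suc_le_mono[THEN iffD2, OF j(1)] \<open>n = Suc j * s\<close>])
  qed
qed

lemma binomial_product_expansion:
  fixes x y :: "'a::comm_semiring_1 poly"
  shows "(x + monom \<alpha> s) ^ m * (y + monom \<beta> s) ^ n =
    (\<Sum>l\<le>m. \<Sum>k\<le>n. monom (of_nat (m choose l) * of_nat (n choose k) * \<alpha> ^ (m - l) * \<beta> ^ (n - k))
                         (s * (m - l + (n - k))) * (x ^ l * y ^ k))"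
proof -
  have "(x + monom \<alpha> s) ^ m * (y + monom \<beta> s) ^ n =
      (\<Sum>l\<le>m. of_nat (m choose l) * x ^ l * monom \<alpha> s ^ (m - l)) *
      (\<Sum>k\<le>n. of_nat (n choose k) * y ^ k * monom \<beta> s ^ (n - k))"
    by (simp only: binomial_ring)
  also have "\<dots> = (\<Sum>l\<le>m. \<Sum>k\<le>n. (of_nat (m choose l) * x ^ l * monom \<alpha> s ^ (m - l)) *
                                    (of_nat (n choose k) * y ^ k * monom \<beta> s ^ (n - k)))"
    by (rule sum_product)
  also have "\<dots> = (\<Sum>l\<le>m. \<Sum>k\<le>n. monom (of_nat (m choose l) * of_nat (n choose k) * \<alpha> ^ (m - l) * \<beta> ^ (n - k))
                         (s * (m - l + (n - k))) * (x ^ l * y ^ k))"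
    by (intro sum.cong refl)
      (simp add: monom_power mult_monom of_nat_poly algebra_simps flip: monom_0)
  finally show ?thesis .
qed

text \<open>The numbers \<open>n\<close> are the exponents occurring in
  \<open>X ^ ((r + 1) (m - l + (m + 1 - k))) (\<beta> X ^ r + \<gamma>) ^ l (C + e X) ^ k\<close>. With
  \<open>U = k + l - b\<close> and \<open>V = k + l - a\<close> one has \<open>n + r U + V = r ^ 2 + r\<close>, which pins \<open>n\<close>
  down according to the size of \<open>U\<close>.\<close>

lemma trinomial_exponent_window:
  fixes r m l k a b n :: nat
  assumes r: "r = 2 * m + 1" and "1 \<le> m" "l \<le> m" "k \<le> m + 1" "a \<le> k" "b \<le> l"
    and n: "n = (r + 1) * (m - l + (m + 1 - k)) + a + r * b"
  shows "\<not> (r * r - r < n \<and> n < r * r - m - 1)"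
    and "n = r * r - r \<Longrightarrow> l = 0 \<and> k = 2 \<and> a = 2"
proof -
  define U V where "U = k + l - b" and "V = k + l - a"
  have "k + l \<le> r"
    using assms by linarith
  then obtain t where t: "r = k + l + t"
    using le_Suc_ex by blast
  have "m - l + (m + 1 - k) = t" using t r assms(3,4) by linarith
  then have "n + r * U + V = (r + 1) * t + r * (b + U) + (a + V)"
    using n by (simp add: algebra_simps)
  also have "\<dots> = (r + 1) * (k + l + t)"
    using assms by (simp add: U_def V_def algebra_simps)
  finally have key: "n + r * U + V = r * r + r"
    using t by simp
  have "r \<le> r * r"
    by simp
  consider "U \<le> 1" | "U = 2" | "3 \<le> U"
    by linarith
  then have "\<not> (r * r - r < n \<and> n < r * r - m - 1) \<and> (n = r * r - r \<longrightarrow> l = 0 \<and> k = 2 \<and> a = 2)"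
  proof cases
    case 1
    then have "r * U \<le> r"
      by (metis mult.right_neutral mult_le_mono2)
    moreover have "V \<le> m + 1"
      using 1 assms unfolding U_def V_def by linarith
    ultimately show ?thesis
      using key r \<open>1 \<le> m\<close> \<open>r \<le> r * r\<close> by linarith
  next
    case 2
    then have "n + V = r * r - r"
      using key \<open>r \<le> r * r\<close> by simp
    moreover have "V = 0 \<Longrightarrow> l = 0 \<and> k = 2 \<and> a = 2"
      using 2 \<open>a \<le> k\<close> \<open>b \<le> l\<close> unfolding U_def V_def by linarith
    ultimately show ?thesis
      by auto
  next
    case 3
    then have "r * 3 \<le> r * U"
      by simp
    with key r \<open>r \<le> r * r\<close> show ?thesis
      by linarith
  qed
  then show "\<not> (r * r - r < n \<and> n < r * r - m - 1)" and "n = r * r - r \<Longrightarrow> l = 0 \<and> k = 2 \<and> a = 2"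
    by auto
qed

lemma coeff_binomial_powers_mult_neq_0E:
  fixes \<beta> \<gamma> C e :: "'a::comm_semiring_1"
  assumes "coeff ((monom \<beta> r + [:\<gamma>:]) ^ l * [:C, e:] ^ k) i \<noteq> 0"
  obtains a b where "a \<le> k" "b \<le> l" "i = a + r * b"
proof -
  obtain i' a where i: "i = i' + a" and
    "coeff ((monom \<beta> r + [:\<gamma>:]) ^ l) i' \<noteq> 0" "coeff ([:C, e:] ^ k) a \<noteq> 0"
    using assms by (rule coeff_mult_neq_0E)
  moreover obtain a' where "a' \<le> k" "a = a' * 1"
    by (rule coeff_power_neq_0E[OF _ \<open>coeff ([:C, e:] ^ k) a \<noteq> 0\<close>])
      (auto simp: coeff_pCons split: nat.splits)
  moreover obtain b where "b \<le> l" "i' = b * r"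
    by (rule coeff_power_neq_0E[OF _ \<open>coeff ((monom \<beta> r + [:\<gamma>:]) ^ l) i' \<noteq> 0\<close>])
      (auto simp: coeff_monom coeff_pCons split: if_splits nat.splits)
  ultimately show thesis
    by (intro that[of a b]) (simp_all add: mult.commute)
qed

lemma degree_trinomial_power_product:
  fixes \<alpha> \<beta> \<gamma> A C e :: "'a::comm_semiring_1"
  shows "degree ((monom \<beta> r + [:\<gamma>:] + monom \<alpha> (r + 1)) ^ m * ([:C, e:] + monom A (r + 1)) ^ (m + 1))
    \<le> (r + 1) * (2 * m + 1)"
proof -
  have deg_G: "degree (monom \<beta> r + [:\<gamma>:] + monom \<alpha> (r + 1)) \<le> r + 1"
    by (intro degree_add_le order.trans[OF degree_monom_le]) auto
  have deg_F: "degree ([:C, e:] + monom A (r + 1)) \<le> r + 1"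
    by (intro degree_add_le order.trans[OF degree_monom_le]) auto
  have "degree ((monom \<beta> r + [:\<gamma>:] + monom \<alpha> (r + 1)) ^ m * ([:C, e:] + monom A (r + 1)) ^ (m + 1))
      \<le> degree (monom \<beta> r + [:\<gamma>:] + monom \<alpha> (r + 1)) * m + degree ([:C, e:] + monom A (r + 1)) * (m + 1)"
    by (intro order.trans[OF degree_mult_le] add_mono degree_power_le)
  also have "\<dots> \<le> (r + 1) * m + (r + 1) * (m + 1)"
    by (intro add_mono mult_right_mono deg_G deg_F) simp_all
  finally show ?thesis
    by (simp add: algebra_simps)
qed

lemma coeff_trinomial_power_product:
  fixes \<alpha> \<beta> \<gamma> A C e :: "'a::comm_semiring_1"
  assumes r: "r = 2 * m + 1" and "1 \<le> m"
  defines "h \<equiv> (monom \<beta> r + [:\<gamma>:] + monom \<alpha> (r + 1)) ^ m * ([:C, e:] + monom A (r + 1)) ^ (m + 1)"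
  shows "r * r - r < n \<Longrightarrow> n < r * r - m - 1 \<Longrightarrow> coeff h n = 0"
    and "coeff h (r * r - r) = of_nat ((m + 1) choose 2) * \<alpha> ^ m * A ^ (m - 1) * e ^ 2"
proof -
  define c where "c l k = of_nat (m choose l) * of_nat ((m + 1) choose k) * \<alpha> ^ (m - l) * A ^ (m + 1 - k)"
    for l k
  define N where "N l k = (r + 1) * (m - l + (m + 1 - k))" for l k
  define T where "T l k = monom (c l k) (N l k) * ((monom \<beta> r + [:\<gamma>:]) ^ l * [:C, e:] ^ k)" for l k
  have h_eq: "h = (\<Sum>l\<le>m. \<Sum>k\<le>m + 1. T l k)"
    unfolding h_def T_def c_def N_def by (rule binomial_product_expansion)
  have T_vanishes: "coeff (T l k) n = 0"
    if "l \<le> m" "k \<le> m + 1"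
      and "(r * r - r < n \<and> n < r * r - m - 1) \<or> (n = r * r - r \<and> \<not> (l = 0 \<and> k = 2))" for l k n
  proof (rule ccontr)
    assume "coeff (T l k) n \<noteq> 0"
    then have "N l k \<le> n" "coeff ((monom \<beta> r + [:\<gamma>:]) ^ l * [:C, e:] ^ k) (n - N l k) \<noteq> 0"
      by (auto simp: T_def coeff_monom_mult split: if_splits)
    then obtain a b where "a \<le> k" "b \<le> l" "n = N l k + a + r * b"
      by (metis coeff_binomial_powers_mult_neq_0E le_add_diff_inverse add.assoc)
    with trinomial_exponent_window[OF r \<open>1 \<le> m\<close> that(1,2)] that(3) show False
      unfolding N_def by blast
  qed
  show "coeff h n = 0" if "r * r - r < n" "n < r * r - m - 1"
    unfolding h_eq coeff_sum using that by (intro sum.neutral ballI T_vanishes) auto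
  have "coeff h (r * r - r) = (\<Sum>l\<le>m. \<Sum>k\<le>m + 1. if l = 0 \<and> k = 2 then coeff (T 0 2) (r * r - r) else 0)"
    unfolding h_eq coeff_sum by (intro sum.cong refl) (auto intro: T_vanishes)
  also have "\<dots> = (\<Sum>l\<le>m. if l = 0 then coeff (T 0 2) (r * r - r) else 0)"
    using \<open>1 \<le> m\<close> by (intro sum.cong refl) (simp add: if_distrib[symmetric] sum.delta)
  also have "\<dots> = coeff (T 0 2) (r * r - r)"
    by simp
  also have "\<dots> = c 0 2 * e ^ 2"
  proof -
    have "r * r - r = N 0 2 + 2"
      using r \<open>1 \<le> m\<close> unfolding N_def by (cases m) (simp_all add: algebra_simps)
    then show ?thesis
      by (simp add: T_def coeff_monom_mult power2_eq_square ac_simps)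
  qed
  finally show "coeff h (r * r - r) = of_nat ((m + 1) choose 2) * \<alpha> ^ m * A ^ (m - 1) * e ^ 2"
    by (simp add: c_def)
qed

lemma trinomial_power_product_minus_coeffs:
  fixes \<alpha> \<beta> \<gamma> A C e :: "'a::comm_ring_1"
  assumes r: "r = 2 * m + 1" and "1 \<le> m"
  defines "F \<equiv> [:C, e:] + monom A (r + 1)"
  defines "H \<equiv> (monom \<beta> r + [:\<gamma>:] + monom \<alpha> (r + 1)) ^ m * F ^ (m + 1) - F"
  shows "degree H \<le> r * r + r"
    and "r * r - r < n \<Longrightarrow> n < r * r - m - 1 \<Longrightarrow> coeff H n = 0"
    and "coeff H (r * r - r) = of_nat ((m + 1) choose 2) * \<alpha> ^ m * A ^ (m - 1) * e ^ 2"
proof -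
  have "3 * r \<le> r * r"
    using r \<open>1 \<le> m\<close> by (intro mult_right_mono) simp_all
  have deg_F: "degree F \<le> r + 1"
    unfolding F_def by (intro degree_add_le order.trans[OF degree_monom_le]) auto
  then have coeff_H: "coeff H j = coeff ((monom \<beta> r + [:\<gamma>:] + monom \<alpha> (r + 1)) ^ m * F ^ (m + 1)) j"
    if "r + 1 < j" for j
    using that by (simp add: H_def coeff_eq_0)
  have "degree ((monom \<beta> r + [:\<gamma>:] + monom \<alpha> (r + 1)) ^ m * F ^ (m + 1)) \<le> (r + 1) * (2 * m + 1)"
    unfolding F_def by (rule degree_trinomial_power_product)
  also have "\<dots> = r * r + r"
    using r by (simp add: algebra_simps)
  finally show "degree H \<le> r * r + r"
    unfolding H_def using deg_F r \<open>3 * r \<le> r * r\<close> by (intro degree_diff_le) linarith+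
  note coeff_product = coeff_trinomial_power_product[OF r \<open>1 \<le> m\<close>,
      where \<alpha> = \<alpha> and \<beta> = \<beta> and \<gamma> = \<gamma> and C = C and e = e and A = A, folded F_def]
  have "r + 1 < r * r - r"
    using r \<open>1 \<le> m\<close> \<open>3 * r \<le> r * r\<close> by linarith
  then show "coeff H n = 0" if "r * r - r < n" "n < r * r - m - 1"
    using that coeff_H[of n] coeff_product(1)[of n] by simp
  from \<open>r + 1 < r * r - r\<close> show "coeff H (r * r - r) = of_nat ((m + 1) choose 2) * \<alpha> ^ m * A ^ (m - 1) * e ^ 2"
    using coeff_H[of "r * r - r"] coeff_product(2) by simp
qed

lemma of_nat_choose_two_neq_0:
  assumes "CARD('a::{field,finite}) = (2 * m + 1) ^ 2"
  shows "of_nat ((m + 1) choose 2) \<noteq> (0::'a)"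
proof
  assume "of_nat ((m + 1) choose 2) = (0::'a)"
  moreover have "2 * ((m + 1) choose 2) = (m + 1) * m"
    by (simp add: choose_two)
  then have "CARD('a) = 8 * ((m + 1) choose 2) + 1"
    using assms by (simp add: power2_eq_square algebra_simps)
  ultimately show False
    using of_nat_card_eq_0[where 'a = 'a] by simp
qed

lemma card_trinomial_square_values_le:
  fixes A e C :: "'a::{field,finite}"
  assumes r_char: "r = CHAR('a) ^ j" and q: "CARD('a) = r ^ 2"
    and r: "r = 2 * m + 1" and "1 \<le> m" and "A \<noteq> 0" "e \<noteq> 0"
    and squares: "\<forall>x\<in>S. \<exists>y. A * x ^ (r + 1) + e * x + C = y ^ 2"
  shows "card S \<le> CARD('a) - m"
proof (rule ccontr)
  assume "\<not> ?thesis"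
  moreover have "card S \<le> CARD('a)"
    by (rule card_mono) auto
  ultimately have card_W: "card (UNIV - S) < m"
    by (simp add: card_Diff_subset)
  define F where "F = [:C, e:] + monom A (r + 1)"
  define H where "H = (monom (e ^ r) r + [:C ^ r:] + monom (A ^ r) (r + 1)) ^ m * F ^ (m + 1) - F"
  note H_props = trinomial_power_product_minus_coeffs[OF r \<open>1 \<le> m\<close>,
      where \<alpha> = "A ^ r" and \<beta> = "e ^ r" and \<gamma> = "C ^ r" and C = C and e = e and A = A,
      folded F_def, folded H_def]
  have vanish: "poly H x = 0" if "x \<in> S" for x
  proof -
    obtain y where "A * x ^ (r + 1) + e * x + C = y ^ 2"
      using squares \<open>x \<in> S\<close> by blast
    from Frobenius_trinomial_power_half_card_succ[OF r_char q r this] show ?thesis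
      by (simp add: H_def F_def poly_monom algebra_simps)
  qed
  have "3 * r \<le> r * r"
    using r \<open>1 \<le> m\<close> by (intro mult_right_mono) simp_all
  have "coeff H (r * r - r) = 0"
  proof (rule coeff_eq_0_if_vanishing_off[where W = "UNIV - S"])
    show "poly H x = 0" if "x \<notin> UNIV - S" for x
      using vanish that by blast
    show "coeff H j = 0" if "r * r - r < j" "j \<le> r * r - r + card (UNIV - S)" for j
      using H_props(2) that card_W r by simp
    show "r * r - r + card (UNIV - S) < CARD('a)"
      using q card_W r \<open>3 * r \<le> r * r\<close> by (simp add: power2_eq_square)
    show "degree H + 1 < CARD('a) + (r * r - r)"
      using H_props(1) q r \<open>1 \<le> m\<close> \<open>3 * r \<le> r * r\<close> unfolding power2_eq_square by linarith
  qed
  moreover have "of_nat ((m + 1) choose 2) \<noteq> (0::'a)"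
    using q unfolding r by (rule of_nat_choose_two_neq_0)
  ultimately show False
    using H_props(3) \<open>A \<noteq> 0\<close> \<open>e \<noteq> 0\<close> by simp
qed

lemma card_square_values_le:
  fixes a b c d :: "'a::{field,finite}"
  assumes r_char: "r = CHAR('a) ^ j" and q: "CARD('a) = r ^ 2"
    and r: "r = 2 * m + 1" and "1 \<le> m" and "a \<noteq> 0" and "a ^ r * b \<noteq> d ^ r * a"
    and squares: "\<forall>x\<in>D. \<exists>y. a * x ^ (r + 1) + d * x ^ r + b * x + c = y ^ 2"
  shows "card D \<le> CARD('a) - m"
proof -
  define t where "t = - d / a"
  define e where "e = a * t ^ r + b"
  have "a * t + d = 0"
    using \<open>a \<noteq> 0\<close> by (simp add: t_def)
  have "e \<noteq> 0"
  proof
    assume "e = 0"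
    have "e * a ^ r = a * (a * t) ^ r + a ^ r * b"
      by (simp add: e_def algebra_simps power_mult_distrib)
    also have "a * t = - d"
      using \<open>a * t + d = 0\<close> by (simp add: eq_neg_iff_add_eq_0)
    finally show False
      using \<open>e = 0\<close> \<open>a ^ r * b \<noteq> d ^ r * a\<close> r by (simp add: algebra_simps)
  qed
  have "\<forall>x\<in>(\<lambda>x. x - t) ` D. \<exists>y. a * x ^ (r + 1) + e * x + (a * t ^ (r + 1) + d * t ^ r + b * t + c) = y ^ 2"
  proof
    fix x assume "x \<in> (\<lambda>x. x - t) ` D"
    then have "x + t \<in> D"
      by auto
    with squares show "\<exists>y. a * x ^ (r + 1) + e * x + (a * t ^ (r + 1) + d * t ^ r + b * t + c) = y ^ 2"
      unfolding e_def shift_Frobenius_trinomial[OF freshmans_dream'[OF prime_CHAR_finite_field r_char]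
          \<open>a * t + d = 0\<close>, symmetric]
      by blast
  qed
  from card_trinomial_square_values_le[OF r_char q r \<open>1 \<le> m\<close> \<open>a \<noteq> 0\<close> \<open>e \<noteq> 0\<close> this]
  show ?thesis
    by (simp add: card_image inj_on_def)
qed

lemma odd_square_root_of_card:
  fixes r :: nat
  assumes "odd (CARD('a::finite))" "CARD('a) = r ^ 2" "CARD('a) > 1"
  obtains m where "r = 2 * m + 1" "1 \<le> m"
proof -
  have "odd r"
    using assms(1,2) by simp
  then obtain m where "r = 2 * m + 1"
    using oddE by blast
  moreover have "r \<noteq> 1"
    using assms(2,3) by auto
  ultimately show thesis
    using that[of m] by simp
qed

theorem lemma2:
  fixes a b c d :: "'a :: {field, finite}"
    and r :: nat
    and D :: "'a set"
  assumes prime_power: "\<exists>p k. prime p \<and> k > 0 \<and> CARD('a) = p ^ k"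
    and odd_q: "odd (CARD('a))"
    and square_q: "CARD('a) = r ^ 2"
    and q_gt: "CARD('a) > 9"
    and a_nz: "a \<noteq> 0"
    and D_card: "real (card D) > real (CARD('a)) - real r / 2 + 1 / 2"
    and D_sq: "\<forall>x\<in>D. \<exists>y. a * x ^ (r + 1) + d * x ^ r + b * x + c = y ^ 2"
  shows "a ^ r * b = d ^ r * a"
proof (rule ccontr)
  assume neq: "a ^ r * b \<noteq> d ^ r * a"
  obtain j where r_char: "r = CHAR('a) ^ j"
    using prime_power square_q square_root_of_card_is_power_of_CHAR by metis
  obtain m where r: "r = 2 * m + 1" and "1 \<le> m"
    by (rule odd_square_root_of_card[OF odd_q square_q]) (use q_gt in simp)
  have "card D \<le> CARD('a) - m"
    using card_square_values_le[OF r_char square_q r \<open>1 \<le> m\<close> a_nz neq D_sq] .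
  moreover have "m \<le> CARD('a)"
    using square_q r by (simp add: power2_eq_square)
  ultimately have "real (card D) \<le> real (CARD('a)) - real m"
    by (metis of_nat_diff of_nat_le_iff)
  moreover have "real r / 2 = real m + 1 / 2"
    using r by simp
  ultimately show False
    using D_card by linarith
qed

end
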